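(* Fix an integer $N$. The part of the $E_1$-page $\mathrm{Ext}_\mathbb{C}[\rho]$ of the $\rho$-Bockstein spectral sequence lying in degrees $(s,f,w)$ with $s+f-w=N$ is a finitely generated $\mathbb{F}_2[\rho]$-module.
   Context: $\mathrm{Ext}_\mathbb{C}$ is the cohomology of the $\mathbb{C}$-motivic Steenrod algebra, $\mathrm{Ext}_{\mathcal{A}^\mathbb{C}}(\mathbb{F}_2[\tau],\mathbb{F}_2[\tau])$, trigraded by $(s,f,w)$ = (stem, Adams filtration, motivic weight). The $\rho$-Bockstein spectral sequence, obtained by filtering the cobar complex of the $\mathbb{R}$-motivic Steenrod algebra by powers of $\rho$, has $E_1=\mathrm{Ext}_\mathbb{C}[\rho]$ with $\rho$ in degree $(-1,0,-1)$ and converges to the cohomology of the $\mathbb{R}$-motivic Steenrod algebra. *)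

theory Defs
  imports Main
begin

text \<open>An F_2-vector with basis type 'b is represented by the finite set of basis
elements with nonzero coefficient; addition is symmetric difference.\<close>

definition vadd :: "'b set \<Rightarrow> 'b set \<Rightarrow> 'b set" where
  "vadd X Y = (X - Y) \<union> (Y - X)"

definition vsum :: "('i \<Rightarrow> 'b set) \<Rightarrow> 'i set \<Rightarrow> 'b set" where
  "vsum F I = {b. odd (card {i \<in> I. b \<in> F i})}"

text \<open>A_* = F_2[tau][tau_0, tau_1, ..., xi_1, xi_2, ...] / (tau_i^2 = tau xi_(i+1)).
As an F_2[tau]-module it is free on the monomials
prod tau_i^(e_i) prod xi_i^(n_i) with e_i in {0,1}.  Such a monomial is encoded
as a pair (E, n): E = set of indices i with e_i = 1, n = exponent function of
the xi_i (i >= 1, n 0 = 0).\<close>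

type_synonym mono = "nat set \<times> (nat \<Rightarrow> nat)"

definition mono_valid :: "mono \<Rightarrow> bool" where
  "mono_valid m = (finite (fst m) \<and> finite {i. snd m i \<noteq> 0} \<and> snd m 0 = 0)"

definition one_mono :: mono where
  "one_mono = ({}, (\<lambda>_. 0))"

definition tau_mono :: "nat \<Rightarrow> mono" where
  "tau_mono i = ({i}, (\<lambda>_. 0))"

text \<open>xi_j^p, with the convention xi_0 = 1.\<close>
definition xipow :: "nat \<Rightarrow> nat \<Rightarrow> mono" where
  "xipow j p = ({}, (if j = 0 then (\<lambda>_. 0) else (\<lambda>_. 0)(j := p)))"

text \<open>Product of monomials: returns (extra power of tau, reduced monomial),
using tau_i^2 = tau xi_(i+1).\<close>
definition mmul :: "mono \<Rightarrow> mono \<Rightarrow> nat \<times> mono" where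
  "mmul a b = (card (fst a \<inter> fst b),
     ((fst a - fst b) \<union> (fst b - fst a),
      (\<lambda>i. snd a i + snd b i + (if 1 \<le> i \<and> i - 1 \<in> fst a \<inter> fst b then 1 else 0))))"

text \<open>Internal (topological) degree and motivic weight of monomials:
|tau_i| = (2^(i+1) - 1, 2^i - 1), |xi_i| = (2^(i+1) - 2, 2^i - 1).\<close>
definition mdeg :: "mono \<Rightarrow> int" where
  "mdeg m = (\<Sum>i\<in>fst m. 2^(i+1) - 1) + (\<Sum>i\<in>{i. snd m i \<noteq> 0}. int (snd m i) * (2^(i+1) - 2))"

definition mwt :: "mono \<Rightarrow> int" where
  "mwt m = (\<Sum>i\<in>fst m. 2^i - 1) + (\<Sum>i\<in>{i. snd m i \<noteq> 0}. int (snd m i) * (2^i - 1))"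

text \<open>Basis of A_* \<otimes>_{F_2[tau]} A_* over F_2: tau^k (a \<otimes> b).\<close>
type_synonym tens2 = "nat \<times> mono \<times> mono"

definition t2mul :: "tens2 \<Rightarrow> tens2 \<Rightarrow> tens2" where
  "t2mul x y = (case x of (k, a, b) \<Rightarrow> case y of (k', a', b') \<Rightarrow>
     (k + k' + fst (mmul a a') + fst (mmul b b'), snd (mmul a a'), snd (mmul b b')))"

definition vmul2 :: "tens2 set \<Rightarrow> tens2 set \<Rightarrow> tens2 set" where
  "vmul2 X Y = vsum (\<lambda>(x, y). {t2mul x y}) (X \<times> Y)"

definition one2 :: "tens2 set" where
  "one2 = {(0, one_mono, one_mono)}"

definition vpow2 :: "tens2 set \<Rightarrow> nat \<Rightarrow> tens2 set" where
  "vpow2 X p = ((vmul2 X) ^^ p) one2"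

definition coprod_xi :: "nat \<Rightarrow> tens2 set" where
  "coprod_xi k = vsum (\<lambda>i. {(0, xipow (k - i) (2^i), xipow i 1)}) {0..k}"

definition coprod_tau :: "nat \<Rightarrow> tens2 set" where
  "coprod_tau k = vadd (vsum (\<lambda>i. {(0, xipow (k - i) (2^i), tau_mono i)}) {0..k})
                       {(0, tau_mono k, one_mono)}"

text \<open>Coproduct of a monomial (multiplicativity of Delta; tau is primitive and
is the base ring).\<close>
definition coprod :: "mono \<Rightarrow> tens2 set" where
  "coprod m = foldr (\<lambda>i acc. vmul2 (coprod_tau i) acc) (sorted_list_of_set (fst m))
     (foldr (\<lambda>j acc. vmul2 (vpow2 (coprod_xi j) (snd m j)) acc)
        [1..<Suc (Max (insert 0 {i. snd m i \<noteq> 0}))] one2)"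

definition rcoprod :: "mono \<Rightarrow> tens2 set" where
  "rcoprod m = vadd (coprod m) {(0, m, one_mono), (0, one_mono, m)}"

text \<open>F_2-basis of the cobar complex: tau^k [a_1 | ... | a_f] with a_i nonunit
basis monomials (i.e. in the augmentation ideal).\<close>
type_synonym cobar = "nat \<times> mono list"

definition cobar_valid :: "cobar \<Rightarrow> bool" where
  "cobar_valid b = (\<forall>a \<in> set (snd b). mono_valid a \<and> a \<noteq> one_mono)"

definition dcobar :: "cobar \<Rightarrow> cobar set" where
  "dcobar b = (case b of (k, as) \<Rightarrow>
     vsum (\<lambda>(i, (c, a1, a2)). {(k + c, take i as @ [a1, a2] @ drop (Suc i) as)})
          (SIGMA i:{..<length as}. rcoprod (as ! i)))"

text \<open>Basis of Ext_C[rho]'s cochain level: rho^j tau^k [a_1|...|a_f].\<close>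
type_synonym rcobar = "nat \<times> cobar"

definition rcochain :: "rcobar set \<Rightarrow> bool" where
  "rcochain X = (finite X \<and> (\<forall>b \<in> X. cobar_valid (snd b)))"

definition drho :: "rcobar set \<Rightarrow> rcobar set" where
  "drho X = vsum (\<lambda>(j, b). (\<lambda>c. (j, c)) ` dcobar b) X"

text \<open>Tridegree (s, f, w): rho has degree (-1,0,-1), tau has (0,0,-1), and
[a_1|...|a_f] has stem sum |a_i| - f, filtration f, weight sum wt(a_i).\<close>
definition rstem :: "rcobar \<Rightarrow> int" where
  "rstem b = (\<Sum>a\<leftarrow>snd (snd b). mdeg a) - int (length (snd (snd b))) - int (fst b)"

definition rfilt :: "rcobar \<Rightarrow> int" where
  "rfilt b = int (length (snd (snd b)))"

definition rweight :: "rcobar \<Rightarrow> int" where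
  "rweight b = (\<Sum>a\<leftarrow>snd (snd b). mwt a) - int (fst (snd b)) - int (fst b)"

text \<open>Action of a polynomial p in F_2[rho] (encoded as its finite set of exponents).\<close>
definition rho_act :: "nat set \<Rightarrow> rcobar set \<Rightarrow> rcobar set" where
  "rho_act p X = vsum (\<lambda>(l, (j, c)). {(l + j, c)}) (p \<times> X)"

definition E1_cocycles :: "int \<Rightarrow> rcobar set set" where
  "E1_cocycles N = {X. rcochain X \<and> (\<forall>b \<in> X. rstem b + rfilt b - rweight b = N) \<and> drho X = {}}"

definition E1_boundary :: "rcobar set \<Rightarrow> bool" where
  "E1_boundary X = (\<exists>Y. rcochain Y \<and> drho Y = X)"

text \<open>The coweight-N part of E_1 = Ext_C[rho] is the quotient
E1_cocycles N / boundaries.\<close>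
definition E1_part_fg :: "int \<Rightarrow> bool" where
  "E1_part_fg N = (\<exists>gs. set gs \<subseteq> E1_cocycles N \<and>
      (\<forall>X \<in> E1_cocycles N. \<exists>ps. length ps = length gs \<and> (\<forall>p \<in> set ps. finite p) \<and>
         E1_boundary (vadd X (vsum (\<lambda>i. rho_act (ps ! i) (gs ! i)) {..<length gs}))))"

end

theory Submission
  imports Defs
begin

text \<open>The class rho has coweight s + f - w = 0, tau has coweight 1, and every monomial of
  A_* of positive degree has positive coweight.  Hence a fixed coweight N contains only
  finitely many rho-free cobar basis elements tau^k [a_1|...|a_f], and so only finitely many
  rho-free cocycles.  Since the differential of E_1 is rho-linear, every cocycle X is the sum of
  the rho^j X_j over its rho-free slices X_j, and each X_j is again a cocycle: the rho-free
  cocycles generate.\<close>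

definition mono_coweight :: "mono \<Rightarrow> int" where
  "mono_coweight m = (\<Sum>i\<in>fst m. 2^i) + (\<Sum>i\<in>{i. snd m i \<noteq> 0}. int (snd m i) * (2^i - 1))"

lemma mdeg_minus_mwt: "mdeg m - mwt m = mono_coweight m"
proof -
  have tau: "(\<Sum>i\<in>fst m. (2::int)^(i+1) - 1) - (\<Sum>i\<in>fst m. 2^i - 1) = (\<Sum>i\<in>fst m. 2^i)"
    by (simp add: sum_subtractf[symmetric])
  have xi: "(\<Sum>i\<in>{i. snd m i \<noteq> 0}. int (snd m i) * (2^(i+1) - 2))
      - (\<Sum>i\<in>{i. snd m i \<noteq> 0}. int (snd m i) * (2^i - 1))
      = (\<Sum>i\<in>{i. snd m i \<noteq> 0}. int (snd m i) * (2^i - 1))"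
    by (simp add: sum_subtractf[symmetric] algebra_simps)
  show ?thesis unfolding mdeg_def mwt_def mono_coweight_def using tau xi by linarith
qed

lemma mono_coweight_summands_nonneg:
  "0 \<le> (\<Sum>i\<in>fst m. (2::int)^i)" "0 \<le> (\<Sum>i\<in>{i. snd m i \<noteq> 0}. int (snd m i) * (2^i - 1))"
  by (auto intro!: sum_nonneg)

lemma mono_coweight_nonneg: "0 \<le> mono_coweight m"
  using mono_coweight_summands_nonneg[of m] unfolding mono_coweight_def by linarith

lemma mono_coweight_ge_tau:
  assumes "mono_valid m" "i \<in> fst m"
  shows "2^i \<le> mono_coweight m"
proof -
  have "2^i \<le> (\<Sum>i\<in>fst m. (2::int)^i)"
    using assms by (intro member_le_sum) (auto simp: mono_valid_def)
  then show ?thesis using mono_coweight_summands_nonneg[of m] unfolding mono_coweight_def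
    by linarith
qed

lemma mono_coweight_ge_xi:
  assumes "mono_valid m" "snd m i \<noteq> 0"
  shows "int i \<le> mono_coweight m" "int (snd m i) \<le> mono_coweight m"
proof -
  have "int (snd m i) * (2^i - 1) \<le> (\<Sum>i\<in>{i. snd m i \<noteq> 0}. int (snd m i) * (2^i - 1))"
    using assms by (intro member_le_sum) (auto simp: mono_valid_def)
  then have bound: "int (snd m i) * (2^i - 1) \<le> mono_coweight m"
    using mono_coweight_summands_nonneg[of m] unfolding mono_coweight_def by linarith
  have "i \<noteq> 0" using assms unfolding mono_valid_def by (cases i) auto
  then have "(2::int)^1 \<le> 2^i" by (intro power_increasing) auto
  then have pos: "1 \<le> (2::int)^i - 1" by simp
  have "int i < 2^i" using of_nat_less_iff[of i "2^i"] by simp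
  then have "int i \<le> 2^i - 1" by simp
  moreover have "2^i - 1 \<le> int (snd m i) * (2^i - 1)"
    using mult_right_mono[of 1 "int (snd m i)" "2^i - 1"] pos assms(2) by simp
  moreover have "int (snd m i) \<le> int (snd m i) * (2^i - 1)"
    using mult_left_mono[OF pos, of "int (snd m i)"] by simp
  ultimately show "int i \<le> mono_coweight m" "int (snd m i) \<le> mono_coweight m"
    using bound by linarith+
qed

lemma mono_coweight_pos:
  assumes "mono_valid m" "m \<noteq> one_mono"
  shows "1 \<le> mono_coweight m"
proof (cases "fst m = {}")
  case False
  then obtain i where "i \<in> fst m" by auto
  then have "2^i \<le> mono_coweight m" by (rule mono_coweight_ge_tau[OF assms(1)])
  moreover have "(1::int) \<le> 2^i" by simp
  ultimately show ?thesis by linarith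
next
  case True
  with assms(2) obtain i where "snd m i \<noteq> 0"
    unfolding one_mono_def by (metis prod.collapse ext)
  then show ?thesis using mono_coweight_ge_xi(2)[OF assms(1)] by fastforce
qed

lemma finite_mono_coweight_le: "finite {m. mono_valid m \<and> mono_coweight m \<le> K}"
proof (rule finite_subset)
  let ?I = "{..nat K}"
  let ?F = "{n. \<forall>i. (i \<in> ?I \<longrightarrow> n i \<in> ?I) \<and> (i \<notin> ?I \<longrightarrow> n i = 0)}"
  show "{m. mono_valid m \<and> mono_coweight m \<le> K} \<subseteq> Pow ?I \<times> ?F"
  proof
    fix m assume "m \<in> {m. mono_valid m \<and> mono_coweight m \<le> K}"
    then have valid: "mono_valid m" and le: "mono_coweight m \<le> K" by auto
    have "i \<in> ?I" if "i \<in> fst m" for i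
    proof -
      have "int i < 2^i" using of_nat_less_iff[of i "2^i"] by simp
      moreover have "2^i \<le> mono_coweight m" using mono_coweight_ge_tau[OF valid that] .
      ultimately have "int i \<le> K" using le by linarith
      then show ?thesis by simp
    qed
    moreover have "i \<in> ?I" "snd m i \<in> ?I" if "snd m i \<noteq> 0" for i
      using mono_coweight_ge_xi[OF valid that] le by simp_all
    ultimately show "m \<in> Pow ?I \<times> ?F"
      by (auto simp: mem_Times_iff) (metis le0 not_gr0)
  qed
  show "finite (Pow ?I \<times> ?F)"
    using finite_set_of_finite_funs[of ?I ?I 0] by simp
qed

definition cobar_coweight :: "cobar \<Rightarrow> int" where
  "cobar_coweight c = int (fst c) + (\<Sum>a\<leftarrow>snd c. mono_coweight a)"

lemma coweight_eq_cobar_coweight: "rstem b + rfilt b - rweight b = cobar_coweight (snd b)"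
proof -
  have "(\<Sum>a\<leftarrow>snd (snd b). mdeg a) - (\<Sum>a\<leftarrow>snd (snd b). mwt a)
      = (\<Sum>a\<leftarrow>snd (snd b). mono_coweight a)"
    by (simp add: sum_list_subtractf[symmetric] mdeg_minus_mwt)
  then show ?thesis unfolding rstem_def rfilt_def rweight_def cobar_coweight_def by linarith
qed

lemma finite_cobar_coweight_eq: "finite {c. cobar_valid c \<and> cobar_coweight c = N}"
proof (rule finite_subset)
  let ?M = "{m. mono_valid m \<and> mono_coweight m \<le> N}"
  show "{c. cobar_valid c \<and> cobar_coweight c = N} \<subseteq>
      {..nat N} \<times> {as. set as \<subseteq> ?M \<and> length as \<le> nat N}"
  proof
    fix c assume "c \<in> {c. cobar_valid c \<and> cobar_coweight c = N}"
    then have valid: "\<And>a. a \<in> set (snd c) \<Longrightarrow> mono_valid a \<and> a \<noteq> one_mono"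
      and N: "int (fst c) + (\<Sum>a\<leftarrow>snd c. mono_coweight a) = N"
      by (auto simp: cobar_valid_def cobar_coweight_def)
    have "int (length (snd c)) \<le> (\<Sum>a\<leftarrow>snd c. mono_coweight a)"
      using sum_list_mono[of "snd c" "\<lambda>_. 1" mono_coweight] mono_coweight_pos valid
      by (simp add: sum_list_triv)
    moreover have "mono_coweight a \<le> (\<Sum>a\<leftarrow>snd c. mono_coweight a)" if "a \<in> set (snd c)" for a
      using that by (intro member_le_sum_list) (auto simp: mono_coweight_nonneg)
    ultimately show "c \<in> {..nat N} \<times> {as. set as \<subseteq> ?M \<and> length as \<le> nat N}"
      using valid N by (force simp: mem_Times_iff)
  qed
  show "finite ({..nat N} \<times> {as. set as \<subseteq> ?M \<and> length as \<le> nat N})"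
    using finite_lists_length_le[OF finite_mono_coweight_le] by blast
qed

lemma finite_rho_free_E1_cocycles: "finite {Y \<in> E1_cocycles N. fst ` Y \<subseteq> {0}}"
proof (rule finite_subset)
  show "{Y \<in> E1_cocycles N. fst ` Y \<subseteq> {0}} \<subseteq> Pow ({0} \<times> {c. cobar_valid c \<and> cobar_coweight c = N})"
    by (force simp: E1_cocycles_def rcochain_def coweight_eq_cobar_coweight)
  show "finite (Pow ({0::nat} \<times> {c. cobar_valid c \<and> cobar_coweight c = N}))"
    using finite_cobar_coweight_eq by simp
qed

definition rho_slice :: "rcobar set \<Rightarrow> nat \<Rightarrow> rcobar set" where
  "rho_slice X j = (\<lambda>c. (0, c)) ` {c. (j, c) \<in> X}"

lemma mem_rho_slice [simp]: "(i, c) \<in> rho_slice X j \<longleftrightarrow> i = 0 \<and> (j, c) \<in> X"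
  by (auto simp: rho_slice_def)

lemma finite_rho_slice: "finite X \<Longrightarrow> finite (rho_slice X j)"
  by (rule finite_subset[of _ "(\<lambda>b. (0, snd b)) ` X"]) (auto intro: rev_image_eqI)

lemma mem_drho: "(j, c) \<in> drho X \<longleftrightarrow> odd (card {b \<in> X. fst b = j \<and> c \<in> dcobar (snd b)})"
proof -
  have "{b \<in> X. (j, c) \<in> (case b of (i, b') \<Rightarrow> (\<lambda>c'. (i, c')) ` dcobar b')}
      = {b \<in> X. fst b = j \<and> c \<in> dcobar (snd b)}" by auto
  then show ?thesis unfolding drho_def vsum_def by simp
qed

lemma drho_rho_slice: "drho (rho_slice X j) = rho_slice (drho X) j"
proof (rule set_eqI)
  fix z :: rcobar
  obtain i c where z: "z = (i, c)" by (cases z)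
  show "z \<in> drho (rho_slice X j) \<longleftrightarrow> z \<in> rho_slice (drho X) j"
  proof (cases "i = 0")
    case True
    have "{b \<in> rho_slice X j. fst b = 0 \<and> c \<in> dcobar (snd b)}
        = (\<lambda>b. (0, snd b)) ` {b \<in> X. fst b = j \<and> c \<in> dcobar (snd b)}"
      by (force simp: rho_slice_def)
    moreover have "inj_on (\<lambda>b. (0::nat, snd b)) {b \<in> X. fst b = j \<and> c \<in> dcobar (snd b)}"
      by (auto simp: inj_on_def prod_eq_iff)
    ultimately show ?thesis using True z by (simp add: mem_drho card_image)
  next
    case False
    then have empty: "{b \<in> rho_slice X j. fst b = i \<and> c \<in> dcobar (snd b)} = {}"
      by (auto simp: rho_slice_def)
    show ?thesis using False z by (simp add: mem_drho empty)
  qed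
qed

lemma rho_slice_in_E1_cocycles:
  assumes "X \<in> E1_cocycles N"
  shows "rho_slice X j \<in> E1_cocycles N"
proof -
  have "drho (rho_slice X j) = {}"
    using assms drho_rho_slice[of X j] by (auto simp: E1_cocycles_def rho_slice_def)
  then show ?thesis using assms finite_rho_slice
    by (auto simp: E1_cocycles_def rcochain_def rho_slice_def coweight_eq_cobar_coweight)
qed

lemma mem_rho_act_rho_free:
  assumes "fst ` Y \<subseteq> {0}"
  shows "(j, c) \<in> rho_act p Y \<longleftrightarrow> j \<in> p \<and> (0, c) \<in> Y"
proof -
  have "{x \<in> p \<times> Y. (j, c) \<in> (case x of (l, i, c') \<Rightarrow> {(l + i, c')})}
      = (if j \<in> p \<and> (0, c) \<in> Y then {(j, (0, c))} else {})"
    using assms by (auto simp: image_subset_iff)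
  then show ?thesis unfolding rho_act_def vsum_def by simp
qed

lemma rho_expansion:
  assumes "distinct gs" "\<forall>g\<in>set gs. fst ` g \<subseteq> {0}" "\<forall>j\<in>fst ` X. rho_slice X j \<in> set gs"
    and "\<forall>i<length gs. ps ! i = {j \<in> fst ` X. rho_slice X j = gs ! i}"
  shows "vsum (\<lambda>i. rho_act (ps ! i) (gs ! i)) {..<length gs} = X"
proof (rule set_eqI)
  fix z :: rcobar
  obtain j c where z: "z = (j, c)" by (cases z)
  have "z \<in> rho_act (ps ! i) (gs ! i) \<longleftrightarrow> (j, c) \<in> X \<and> gs ! i = rho_slice X j"
    if "i < length gs" for i
  proof -
    have "fst ` (gs ! i) \<subseteq> {0}" using assms(2) nth_mem[OF that] by (rule bspec)
    then have "z \<in> rho_act (ps ! i) (gs ! i) \<longleftrightarrow> j \<in> ps ! i \<and> (0, c) \<in> gs ! i"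
      unfolding z by (rule mem_rho_act_rho_free)
    also have "\<dots> \<longleftrightarrow> j \<in> fst ` X \<and> rho_slice X j = gs ! i \<and> (0, c) \<in> rho_slice X j"
      using assms(4) that by (simp del: mem_rho_slice) metis
    also have "\<dots> \<longleftrightarrow> (j, c) \<in> X \<and> gs ! i = rho_slice X j"
      by (auto intro: rev_image_eqI)
    finally show ?thesis .
  qed
  then have hits: "{i \<in> {..<length gs}. z \<in> rho_act (ps ! i) (gs ! i)}
      = {i \<in> {..<length gs}. (j, c) \<in> X \<and> gs ! i = rho_slice X j}"
    by auto
  show "z \<in> vsum (\<lambda>i. rho_act (ps ! i) (gs ! i)) {..<length gs} \<longleftrightarrow> z \<in> X"
  proof (cases "(j, c) \<in> X")
    case True
    then have "rho_slice X j \<in> set gs" using assms(3) by (force intro: rev_image_eqI)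
    then obtain i0 where "i0 < length gs" "gs ! i0 = rho_slice X j"
      by (auto simp: in_set_conv_nth)
    with assms(1) have "{i \<in> {..<length gs}. gs ! i = rho_slice X j} = {i0}"
      by (auto simp: nth_eq_iff_index_eq) (metis nth_eq_iff_index_eq)
    then show ?thesis using True by (simp only: vsum_def mem_Collect_eq hits) (simp add: z)
  next
    case False
    then show ?thesis by (simp only: vsum_def mem_Collect_eq hits) (simp add: z)
  qed
qed

lemma E1_boundary_empty: "E1_boundary {}"
  unfolding E1_boundary_def rcochain_def by (rule exI[of _ "{}"]) (simp add: drho_def vsum_def)

theorem lemma5p4:
  fixes N :: int
  shows "E1_part_fg N"
proof -
  obtain gs where gs: "set gs = {Y \<in> E1_cocycles N. fst ` Y \<subseteq> {0}}" "distinct gs"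
    using finite_distinct_list[OF finite_rho_free_E1_cocycles] by blast
  have "\<exists>ps. length ps = length gs \<and> (\<forall>p\<in>set ps. finite p) \<and>
      E1_boundary (vadd X (vsum (\<lambda>i. rho_act (ps ! i) (gs ! i)) {..<length gs}))"
    if X: "X \<in> E1_cocycles N" for X
  proof -
    define ps where "ps = map (\<lambda>g. {j \<in> fst ` X. rho_slice X j = g}) gs"
    have "finite X" using X by (simp add: E1_cocycles_def rcochain_def)
    then have "\<forall>p\<in>set ps. finite p" by (auto simp: ps_def)
    moreover have "vsum (\<lambda>i. rho_act (ps ! i) (gs ! i)) {..<length gs} = X"
    proof (rule rho_expansion)
      show "\<forall>j\<in>fst ` X. rho_slice X j \<in> set gs"
        using gs(1) rho_slice_in_E1_cocycles[OF X] by (auto simp: rho_slice_def)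
    qed (use gs in \<open>auto simp: ps_def\<close>)
    moreover have "length ps = length gs" by (simp add: ps_def)
    ultimately show ?thesis using E1_boundary_empty by (intro exI[of _ ps]) (simp add: vadd_def)
  qed
  then show ?thesis unfolding E1_part_fg_def using gs(1) by blast
qed

end
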